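(* Let $k\ge 2$ and let $K>0$, $\sigma>0$, $0<d_0<d_1$, $0<\beta\le \tfrac12$, and let $\theta$ be a positive even integer. Consider agents with positions $x_i(t)\in\mathbb{R}^n$ and velocities $v_i(t)\in\mathbb{R}^n$, $i=1,\dots,k$, evolving by $$\dot x_i=v_i,\qquad \dot v_i=\sum_{j=1}^k a_{ij}(x)(v_j-v_i)+\Lambda(v)\sum_{j\neq i} f_0(\|x_i-x_j\|^2)(x_i-x_j)+\Lambda(v)\sum_{j\ne i} f_1(\|x_i-x_j\|^2)(x_j-x_i),$$ where $$a_{ij}(x)=\frac{K}{(\sigma^2+\|x_i-x_j\|^2)^{\beta}},\quad \Lambda(v)=\Big(\frac1k\sum_{i>j}\|v_i-v_j\|^2\Big)^{1/2},\quad f_0(r)=\frac{1}{(r-d_0)^{\theta}},\quad f_1(r)=\frac{1}{(r-d_1)^{\theta}}.$$ Suppose the initial positions satisfy $d_0<\|x_i(0)-x_j(0)\|^2<d_1$ for all $i\neq j$, and let $(x(t),v(t))$ be a solution defined for all $t\ge 0$. Then the average velocity $\bar v(t)=\frac1k\sum_{i=1}^k v_i(t)$ is constant in $t$, the deviations $\|x_i(t)-\bar x(t)\|$ (with $\bar x=\frac1k\sum_i x_i$) remain bounded for $t\ge0$, $\int_0^\infty\big(\sum_{i=1}^k\|v_i(t)-\bar v\|^2\big)^{1/2}dt<\infty$, and $v_i(t)-\bar v\to 0$ as $t\to\infty$ for every $i$; i.e. all velocities converge to a common value.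
   Context: $\|\cdot\|$ is the Euclidean norm. The term $\sum_j a_{ij}(x)(v_j-v_i)$ is the alignment term, the $f_0$ term the separation term, and the $f_1$ term the cohesion term. Note $\Lambda(v)$ equals $\big(\sum_{i=1}^k\|v_i-\bar v\|^2\big)^{1/2}$. *)

theory Defs
  imports "HOL-Analysis.Analysis"
begin

definition align_weight :: "real \<Rightarrow> real \<Rightarrow> real \<Rightarrow> real ^ 'n \<Rightarrow> real ^ 'n \<Rightarrow> real" where
  "align_weight K \<sigma> \<beta> xi xj = K / (\<sigma>\<^sup>2 + (norm (xi - xj))\<^sup>2) powr \<beta>"

definition Lambda :: "('k::{finite,linorder} \<Rightarrow> real ^ 'n) \<Rightarrow> real" where
  "Lambda v = sqrt ((1 / real CARD('k)) * (\<Sum>(i, j) \<in> {(i, j). j < i}. (norm (v i - v j))\<^sup>2))"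

definition fsing :: "real \<Rightarrow> nat \<Rightarrow> real \<Rightarrow> real" where
  "fsing d \<theta> r = 1 / (r - d) ^ \<theta>"

definition avg :: "('k::finite \<Rightarrow> real ^ 'n) \<Rightarrow> real ^ 'n" where
  "avg v = (1 / real CARD('k)) *\<^sub>R (\<Sum>i\<in>UNIV. v i)"

definition flock_rhs ::
  "real \<Rightarrow> real \<Rightarrow> real \<Rightarrow> real \<Rightarrow> real \<Rightarrow> nat \<Rightarrow>
   ('k::{finite,linorder} \<Rightarrow> real ^ 'n) \<Rightarrow> ('k \<Rightarrow> real ^ 'n) \<Rightarrow> 'k \<Rightarrow> real ^ 'n" where
  "flock_rhs K \<sigma> \<beta> d0 d1 \<theta> x v i =
     (\<Sum>j\<in>UNIV. align_weight K \<sigma> \<beta> (x i) (x j) *\<^sub>R (v j - v i))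
     + Lambda v *\<^sub>R (\<Sum>j\<in>UNIV - {i}. fsing d0 \<theta> ((norm (x i - x j))\<^sup>2) *\<^sub>R (x i - x j))
     + Lambda v *\<^sub>R (\<Sum>j\<in>UNIV - {i}. fsing d1 \<theta> ((norm (x i - x j))\<^sup>2) *\<^sub>R (x j - x i))"

end

theory Submission
  imports Defs
begin

text \<open>
  The argument is a Lyapunov estimate. The forces are sums of antisymmetric pair forces, so the
  mean velocity is conserved, and the singular terms derive from a pair potential that is positive
  on \<open>(d0, d1)\<close> and blows up at both ends. As the distances never hit the singular values, they
  stay in \<open>(d0, d1)\<close>, where every alignment weight is at least \<open>K / (\<sigma>\<^sup>2 + d1)\<^sup>\<beta>\<close>. With
  \<open>\<Lambda>\<close> the velocity spread and \<open>Q\<close> the total potential, the singular forces do work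
  \<open>-Q'\<close> on \<open>\<Lambda>\<close> while alignment dissipates, giving \<open>(\<Lambda> + Q)' \<le> -c \<Lambda>\<close>.
  Hence \<open>\<Lambda>\<close> is integrable and \<open>Q\<close> is bounded; bounded \<open>Q\<close> keeps the distances away from
  \<open>d0\<close> and \<open>d1\<close>, so the accelerations are bounded, the velocities are Lipschitz, and an
  integrable bound on a Lipschitz function forces it to tend to zero (Barbalat).
\<close>

section \<open>Sums over pairs of agents\<close>

lemma sum_sum_antisym_eq_0:
  fixes h :: "'i \<Rightarrow> 'i \<Rightarrow> 'a::real_vector"
  assumes antisym: "\<And>i j. h j i = - h i j"
  shows "(\<Sum>i\<in>I. \<Sum>j\<in>I. h i j) = 0"
proof -
  have "(\<Sum>i\<in>I. \<Sum>j\<in>I. h i j) = (\<Sum>j\<in>I. \<Sum>i\<in>I. - h j i)"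
    by (subst sum.swap) (intro sum.cong refl antisym)
  then have "2 *\<^sub>R (\<Sum>i\<in>I. \<Sum>j\<in>I. h i j) = 0"
    by (simp add: sum_negf scaleR_2 eq_neg_iff_add_eq_0)
  then show ?thesis by simp
qed

lemma sum_inner_sum_antisym:
  fixes h :: "'i \<Rightarrow> 'i \<Rightarrow> 'a::real_inner"
  assumes antisym: "\<And>i j. h j i = - h i j"
  shows "(\<Sum>i\<in>I. w i \<bullet> (\<Sum>j\<in>I. h i j)) = (1/2) * (\<Sum>i\<in>I. \<Sum>j\<in>I. h i j \<bullet> (w i - w j))"
proof -
  have "(\<Sum>i\<in>I. \<Sum>j\<in>I. h i j \<bullet> w j) = (\<Sum>j\<in>I. \<Sum>i\<in>I. - (h j i \<bullet> w j))"
    by (subst sum.swap) (intro sum.cong refl, subst antisym, simp)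
  then have "(\<Sum>i\<in>I. \<Sum>j\<in>I. h i j \<bullet> w j) = - (\<Sum>i\<in>I. \<Sum>j\<in>I. h i j \<bullet> w i)"
    by (simp add: sum_negf)
  then show ?thesis
    by (simp add: inner_diff_right sum_subtractf inner_sum_right inner_commute)
qed

lemma sum_sum_norm_diff_sq:
  fixes w :: "'i \<Rightarrow> 'a::real_inner"
  shows "(\<Sum>i\<in>I. \<Sum>j\<in>I. (norm (w i - w j))\<^sup>2)
       = 2 * real (card I) * (\<Sum>i\<in>I. (norm (w i))\<^sup>2) - 2 * (norm (\<Sum>i\<in>I. w i))\<^sup>2"
proof -
  have "(norm (w i - w j))\<^sup>2 = (norm (w i))\<^sup>2 + (norm (w j))\<^sup>2 - 2 * (w i \<bullet> w j)" for i j
    by (simp add: power2_norm_eq_inner inner_diff_left inner_diff_right inner_commute)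
  then have "(\<Sum>i\<in>I. \<Sum>j\<in>I. (norm (w i - w j))\<^sup>2)
      = (\<Sum>i\<in>I. \<Sum>j\<in>I. (norm (w i))\<^sup>2) + (\<Sum>i\<in>I. \<Sum>j\<in>I. (norm (w j))\<^sup>2)
        - 2 * (\<Sum>i\<in>I. \<Sum>j\<in>I. w i \<bullet> w j)"
    by (simp add: sum_subtractf sum.distrib sum_distrib_left)
  moreover have "(norm (\<Sum>i\<in>I. w i))\<^sup>2 = (\<Sum>i\<in>I. \<Sum>j\<in>I. w i \<bullet> w j)"
    unfolding power2_norm_eq_inner inner_sum_left inner_sum_right by (rule sum.swap)
  ultimately show ?thesis by (simp add: sum_distrib_left mult.assoc)
qed

lemma sum_diff_avg_eq_0: "(\<Sum>i\<in>UNIV. v i - avg v) = 0"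
  unfolding avg_def by (simp add: sum_subtractf sum_constant_scaleR del: sum_constant)

lemma norm_diff_avg_le:
  fixes y :: "'k::finite \<Rightarrow> real ^ 'n"
  assumes "\<And>j. norm (y i - y j) \<le> D"
  shows "norm (y i - avg y) \<le> D"
proof -
  have "y i - avg y = (1 / real CARD('k)) *\<^sub>R (\<Sum>j\<in>UNIV. y i - y j)"
    unfolding avg_def
    by (simp add: sum_subtractf scaleR_diff_right sum_constant_scaleR del: sum_constant)
  then have "norm (y i - avg y) \<le> (1 / real CARD('k)) * (\<Sum>j\<in>UNIV. norm (y i - y j))"
    using norm_sum[of "\<lambda>j. y i - y j" UNIV] by (simp add: divide_right_mono)
  also have "\<dots> \<le> (1 / real CARD('k)) * (\<Sum>j\<in>(UNIV::'k set). D)"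
    using assms by (intro mult_left_mono sum_mono) auto
  finally show ?thesis by simp
qed

lemma sum_sum_norm_diff_sq_avg:
  fixes v :: "'k::finite \<Rightarrow> real ^ 'n"
  shows "(\<Sum>i\<in>UNIV. \<Sum>j\<in>UNIV. (norm (v i - v j))\<^sup>2)
       = 2 * real CARD('k) * (\<Sum>i\<in>UNIV. (norm (v i - avg v))\<^sup>2)"
  using sum_sum_norm_diff_sq[of "\<lambda>i. v i - avg v" UNIV] by (simp add: sum_diff_avg_eq_0)

lemma sum_lower_triangle_eq_half:
  fixes s :: "'k::{finite,linorder} \<Rightarrow> 'k \<Rightarrow> real"
  assumes sym: "\<And>i j. s i j = s j i" and diag: "\<And>i. s i i = 0"
  shows "(\<Sum>(i, j) \<in> {(i, j). j < i}. s i j) = (1/2) * (\<Sum>i\<in>UNIV. \<Sum>j\<in>UNIV. s i j)"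
proof -
  let ?L = "{(i::'k, j). j < i}" and ?U = "{(i::'k, j). i < j}" and ?D = "{(i::'k, j). i = j}"
  have part: "(UNIV :: ('k \<times> 'k) set) = ?L \<union> ?U \<union> ?D" by auto
  have "(\<Sum>(i, j)\<in>UNIV. s i j)
      = (\<Sum>(i, j)\<in>?L. s i j) + (\<Sum>(i, j)\<in>?U. s i j) + (\<Sum>(i, j)\<in>?D. s i j)"
    by (subst part, subst sum.union_disjoint, simp, simp, force,
        subst sum.union_disjoint, simp, simp, force, simp)
  moreover have "(\<Sum>(i, j)\<in>?U. s i j) = (\<Sum>(i, j)\<in>?L. s i j)"
    by (rule sum.reindex_bij_witness[where i = prod.swap and j = prod.swap]) (auto simp: sym)
  moreover have "(\<Sum>(i, j)\<in>?D. s i j) = 0" by (rule sum.neutral) (auto simp: diag)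
  ultimately show ?thesis by (simp add: sum.cartesian_product)
qed

lemma Lambda_eq_sqrt_sum_deviation:
  fixes v :: "'k::{finite,linorder} \<Rightarrow> real ^ 'n"
  shows "Lambda v = sqrt (\<Sum>i\<in>UNIV. (norm (v i - avg v))\<^sup>2)"
proof -
  have "(\<Sum>(i, j) \<in> {(i, j). j < i}. (norm (v i - v j))\<^sup>2)
      = (1/2) * (\<Sum>i\<in>UNIV. \<Sum>j\<in>UNIV. (norm (v i - v j))\<^sup>2)"
    by (rule sum_lower_triangle_eq_half) (auto simp: norm_minus_commute)
  then show ?thesis
    unfolding Lambda_def sum_sum_norm_diff_sq_avg by (simp add: field_simps)
qed

section \<open>The flocking field as a sum of pair forces\<close>

lemma Lambda_nonneg: "Lambda v \<ge> 0"
  unfolding Lambda_def by (intro real_sqrt_ge_zero mult_nonneg_nonneg sum_nonneg) auto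

definition pair_force ::
  "real \<Rightarrow> real \<Rightarrow> real \<Rightarrow> real \<Rightarrow> real \<Rightarrow> nat \<Rightarrow>
   ('k::{finite,linorder} \<Rightarrow> real ^ 'n) \<Rightarrow> ('k \<Rightarrow> real ^ 'n) \<Rightarrow> 'k \<Rightarrow> 'k \<Rightarrow> real ^ 'n" where
  "pair_force K \<sigma> \<beta> d0 d1 \<theta> x v i j =
     align_weight K \<sigma> \<beta> (x i) (x j) *\<^sub>R (v j - v i)
     + (Lambda v * (fsing d0 \<theta> ((norm (x i - x j))\<^sup>2) - fsing d1 \<theta> ((norm (x i - x j))\<^sup>2)))
         *\<^sub>R (x i - x j)"

lemma flock_rhs_eq_sum_pair_force:
  fixes x v :: "'k::{finite,linorder} \<Rightarrow> real ^ 'n"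
  shows "flock_rhs K \<sigma> \<beta> d0 d1 \<theta> x v i = (\<Sum>j\<in>UNIV. pair_force K \<sigma> \<beta> d0 d1 \<theta> x v i j)"
proof -
  have extend: "(\<Sum>j\<in>UNIV - {i}. f j *\<^sub>R (x i - x j)) = (\<Sum>j\<in>UNIV. f j *\<^sub>R (x i - x j))"
    for f :: "'k \<Rightarrow> real"
    by (rule sum.mono_neutral_left) auto
  have flip: "(\<Sum>j\<in>UNIV - {i}. f j *\<^sub>R (x j - x i)) = - (\<Sum>j\<in>UNIV - {i}. f j *\<^sub>R (x i - x j))"
    for f :: "'k \<Rightarrow> real"
    by (simp add: sum_negf[symmetric] algebra_simps)
  show ?thesis
    unfolding flock_rhs_def pair_force_def flip extend
    by (simp add: sum.distrib scaleR_sum_right sum_subtractf[symmetric] right_diff_distrib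
        scaleR_left_diff_distrib)
qed

lemma pair_force_antisym:
  "pair_force K \<sigma> \<beta> d0 d1 \<theta> x v j i = - pair_force K \<sigma> \<beta> d0 d1 \<theta> x v i j"
  unfolding pair_force_def align_weight_def by (simp add: norm_minus_commute algebra_simps)

lemma sum_flock_rhs_eq_0: "(\<Sum>i\<in>UNIV. flock_rhs K \<sigma> \<beta> d0 d1 \<theta> x v i) = 0"
  unfolding flock_rhs_eq_sum_pair_force by (rule sum_sum_antisym_eq_0[OF pair_force_antisym])

lemma flock_rhs_const_velocity: "flock_rhs K \<sigma> \<beta> d0 d1 \<theta> x (\<lambda>_. c) i = 0"
  by (simp add: flock_rhs_def Lambda_def)

lemma sum_inner_flock_rhs:
  "(\<Sum>i\<in>UNIV. (v i - c) \<bullet> flock_rhs K \<sigma> \<beta> d0 d1 \<theta> x v i)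
   = (1/2) * (\<Sum>i\<in>UNIV. \<Sum>j\<in>UNIV.
       Lambda v * (fsing d0 \<theta> ((norm (x i - x j))\<^sup>2) - fsing d1 \<theta> ((norm (x i - x j))\<^sup>2))
         * ((x i - x j) \<bullet> (v i - v j))
       - align_weight K \<sigma> \<beta> (x i) (x j) * (norm (v i - v j))\<^sup>2)"
proof -
  have "(v j - v i) \<bullet> (v i - v j) = - (norm (v i - v j))\<^sup>2" for i j
    by (simp add: power2_norm_eq_inner inner_diff_left inner_diff_right inner_commute)
  then have "pair_force K \<sigma> \<beta> d0 d1 \<theta> x v i j \<bullet> ((v i - c) - (v j - c))
    = Lambda v * (fsing d0 \<theta> ((norm (x i - x j))\<^sup>2) - fsing d1 \<theta> ((norm (x i - x j))\<^sup>2))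
         * ((x i - x j) \<bullet> (v i - v j))
       - align_weight K \<sigma> \<beta> (x i) (x j) * (norm (v i - v j))\<^sup>2" for i j
    by (simp add: pair_force_def inner_add_left)
  then show ?thesis
    unfolding flock_rhs_eq_sum_pair_force sum_inner_sum_antisym[OF pair_force_antisym] by simp
qed

lemma align_weight_nonneg: "K \<ge> 0 \<Longrightarrow> align_weight K \<sigma> \<beta> y z \<ge> 0"
  unfolding align_weight_def by simp

lemma align_weight_le:
  assumes "K \<ge> 0" "\<sigma> \<noteq> 0" "\<beta> \<ge> 0"
  shows "align_weight K \<sigma> \<beta> y z \<le> K / (\<sigma>\<^sup>2) powr \<beta>"
  unfolding align_weight_def using assms by (intro divide_left_mono powr_mono2) auto

lemma align_weight_ge:
  assumes "K \<ge> 0" "\<sigma> \<noteq> 0" "\<beta> \<ge> 0" "(norm (y - z))\<^sup>2 \<le> D"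
  shows "K / (\<sigma>\<^sup>2 + D) powr \<beta> \<le> align_weight K \<sigma> \<beta> y z"
proof -
  have "\<sigma>\<^sup>2 + D > 0"
    using assms by (metis add_pos_nonneg order_trans zero_le_power2 zero_less_power2)
  then show ?thesis
    unfolding align_weight_def using assms by (intro divide_left_mono powr_mono2) auto
qed

lemma norm_flock_rhs_le:
  fixes x v :: "'k::{finite,linorder} \<Rightarrow> real ^ 'n"
  assumes "K \<ge> 0" "\<sigma> \<noteq> 0" "\<beta> \<ge> 0" "M \<ge> 0"
    and V: "\<And>j. norm (v j - v i) \<le> V" and X: "\<And>j. norm (x i - x j) \<le> X"
    and M: "\<And>j. j \<noteq> i \<Longrightarrow> \<bar>fsing d0 \<theta> ((norm (x i - x j))\<^sup>2)\<bar> \<le> M"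
           "\<And>j. j \<noteq> i \<Longrightarrow> \<bar>fsing d1 \<theta> ((norm (x i - x j))\<^sup>2)\<bar> \<le> M"
  shows "norm (flock_rhs K \<sigma> \<beta> d0 d1 \<theta> x v i)
    \<le> real CARD('k) * (K / (\<sigma>\<^sup>2) powr \<beta> * V + Lambda v * (2 * M) * X)"
proof -
  have "V \<ge> 0" "X \<ge> 0" using V[of i] X[of i] by auto
  have "norm (pair_force K \<sigma> \<beta> d0 d1 \<theta> x v i j) \<le> K / (\<sigma>\<^sup>2) powr \<beta> * V + Lambda v * (2 * M) * X"
    for j
  proof (cases "j = i")
    case True
    have "0 \<le> K / (\<sigma>\<^sup>2) powr \<beta> * V + Lambda v * (2 * M) * X"
      using \<open>V \<ge> 0\<close> \<open>X \<ge> 0\<close> \<open>M \<ge> 0\<close> \<open>K \<ge> 0\<close> Lambda_nonneg[of v] by simp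
    then show ?thesis using True by (simp add: pair_force_def)
  next
    case False
    let ?f = "\<lambda>d. fsing d \<theta> ((norm (x i - x j))\<^sup>2)"
    have "\<bar>?f d0 - ?f d1\<bar> \<le> 2 * M" using M[OF False] by linarith
    then have "\<bar>Lambda v * (?f d0 - ?f d1)\<bar> * norm (x i - x j) \<le> Lambda v * (2 * M) * X"
      using X[of j] \<open>M \<ge> 0\<close> Lambda_nonneg[of v] by (auto simp: abs_mult intro!: mult_mono)
    moreover have "align_weight K \<sigma> \<beta> (x i) (x j) * norm (v j - v i) \<le> K / (\<sigma>\<^sup>2) powr \<beta> * V"
      using assms align_weight_nonneg align_weight_le by (intro mult_mono) auto
    moreover have "norm (pair_force K \<sigma> \<beta> d0 d1 \<theta> x v i j)
        \<le> \<bar>align_weight K \<sigma> \<beta> (x i) (x j)\<bar> * norm (v j - v i)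
          + \<bar>Lambda v * (?f d0 - ?f d1)\<bar> * norm (x i - x j)"
      unfolding pair_force_def by (rule order_trans[OF norm_triangle_ineq]) simp
    ultimately show ?thesis
      using align_weight_nonneg[OF \<open>K \<ge> 0\<close>, of \<sigma> \<beta> "x i" "x j"] by simp
  qed
  then have "(\<Sum>j\<in>UNIV. norm (pair_force K \<sigma> \<beta> d0 d1 \<theta> x v i j))
      \<le> real CARD('k) * (K / (\<sigma>\<^sup>2) powr \<beta> * V + Lambda v * (2 * M) * X)"
    by (rule sum_bounded_above)
  then show ?thesis
    unfolding flock_rhs_eq_sum_pair_force by (rule order_trans[OF norm_sum])
qed

section \<open>Real analysis\<close>

text \<open>At a zero of the sum, the square root is differentiable only because all derivatives vanish
  there as well: then \<open>sqrt (\<Sum>i. (norm (u i s))\<^sup>2) \<le> (\<Sum>i. norm (u i s)) = o(s - t)\<close>.\<close>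

lemma has_real_derivative_sqrt_sum_norm_sq:
  fixes u :: "'i \<Rightarrow> real \<Rightarrow> 'a::real_inner"
  assumes "finite I"
    and deriv: "\<And>i. i \<in> I \<Longrightarrow> (u i has_vector_derivative u' i) (at t within S)"
    and stationary: "(\<Sum>i\<in>I. (norm (u i t))\<^sup>2) = 0 \<Longrightarrow> \<forall>i\<in>I. u' i = 0"
  shows "((\<lambda>s. sqrt (\<Sum>i\<in>I. (norm (u i s))\<^sup>2)) has_real_derivative
           (if (\<Sum>i\<in>I. (norm (u i t))\<^sup>2) = 0 then 0
            else (\<Sum>i\<in>I. u i t \<bullet> u' i) / sqrt (\<Sum>i\<in>I. (norm (u i t))\<^sup>2))) (at t within S)"
proof (cases "(\<Sum>i\<in>I. (norm (u i t))\<^sup>2) = 0")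
  case False
  then have pos: "(\<Sum>i\<in>I. (norm (u i t))\<^sup>2) > 0"
    using sum_nonneg[of I "\<lambda>i. (norm (u i t))\<^sup>2"] by fastforce
  have "((\<lambda>s. \<Sum>i\<in>I. u i s \<bullet> u i s) has_real_derivative (\<Sum>i\<in>I. 2 * (u i t \<bullet> u' i))) (at t within S)"
  proof (rule DERIV_sum)
    fix i assume "i \<in> I"
    from bounded_bilinear.has_vector_derivative[OF bounded_bilinear_inner deriv[OF this] deriv[OF this]]
    show "((\<lambda>s. u i s \<bullet> u i s) has_real_derivative 2 * (u i t \<bullet> u' i)) (at t within S)"
      by (simp add: has_real_derivative_iff_has_vector_derivative inner_commute)
  qed
  from DERIV_chain2[OF DERIV_real_sqrt[OF pos[unfolded power2_norm_eq_inner]] this] show ?thesis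
    using False by (simp add: power2_norm_eq_inner sum_distrib_left[symmetric] field_simps)
next
  case True
  then have u0: "u i t = 0" and u'0: "u' i = 0" if "i \<in> I" for i
    using that stationary \<open>finite I\<close> by (auto simp: sum_nonneg_eq_0_iff)
  have quot: "((\<lambda>s. norm (u i s) / norm (s - t)) \<longlongrightarrow> 0) (at t within S)" if "i \<in> I" for i
  proof -
    have "((\<lambda>s. (u i s - u i t - (s - t) *\<^sub>R u' i) /\<^sub>R norm (s - t)) \<longlongrightarrow> 0) (at t within S)"
      using deriv[OF that] unfolding has_vector_derivative_def has_derivative_at_within by simp
    then show ?thesis
      using tendsto_norm_zero u0[OF that] u'0[OF that] by (force simp: divide_inverse mult.commute)
  qed
  have "((\<lambda>s. (sqrt (\<Sum>i\<in>I. (norm (u i s))\<^sup>2) - sqrt (\<Sum>i\<in>I. (norm (u i t))\<^sup>2)) / (s - t))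
         \<longlongrightarrow> 0) (at t within S)"
  proof (rule Lim_null_comparison)
    show "((\<lambda>s. \<Sum>i\<in>I. norm (u i s) / norm (s - t)) \<longlongrightarrow> 0) (at t within S)"
      by (intro tendsto_null_sum quot)
    have "sqrt (\<Sum>i\<in>I. (norm (u i s))\<^sup>2) \<le> (\<Sum>i\<in>I. norm (u i s))" for s
      using L2_set_le_sum[of I "\<lambda>i. norm (u i s)"] by (simp add: L2_set_def)
    then show "\<forall>\<^sub>F s in at t within S. norm ((sqrt (\<Sum>i\<in>I. (norm (u i s))\<^sup>2)
        - sqrt (\<Sum>i\<in>I. (norm (u i t))\<^sup>2)) / (s - t)) \<le> (\<Sum>i\<in>I. norm (u i s) / norm (s - t))"
      using True by (intro always_eventually allI)
        (simp add: sum_divide_distrib[symmetric] abs_div divide_right_mono sum_nonneg)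
  qed
  then show ?thesis using True by (simp add: has_field_derivative_iff)
qed

text \<open>No continuity of \<open>E\<close> is needed: a derivative is always Henstock-Kurzweil integrable.\<close>

lemma dissipation_integral_le:
  fixes E g :: "real \<Rightarrow> real"
  assumes "a \<le> b"
    and deriv: "\<And>t. t \<in> {a..b} \<Longrightarrow> \<exists>D. (E has_real_derivative D) (at t within {a..b}) \<and> D \<le> - g t"
    and g: "g integrable_on {a..b}"
  shows "E b + integral {a..b} g \<le> E a"
proof -
  obtain E' where E': "\<And>t. t \<in> {a..b} \<Longrightarrow>
      (E has_real_derivative E' t) (at t within {a..b}) \<and> E' t \<le> - g t"
    using deriv by metis
  have "(E' has_integral E b - E a) {a..b}"
    using E' by (intro fundamental_theorem_of_calculus \<open>a \<le> b\<close>)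
      (simp add: has_real_derivative_iff_has_vector_derivative[symmetric])
  moreover have "((\<lambda>t. - g t) has_integral - integral {a..b} g) {a..b}"
    using g by (intro has_integral_neg integrable_integral)
  ultimately have "E b - E a \<le> - integral {a..b} g"
    by (rule has_integral_le) (use E' in auto)
  then show ?thesis by simp
qed

lemma integral_tendsto_at_top_if_nonneg_bounded:
  fixes g :: "real \<Rightarrow> real"
  assumes cont: "continuous_on {a..} g" and nonneg: "\<And>t. t \<ge> a \<Longrightarrow> g t \<ge> 0"
    and bounded: "\<And>b. integral {a..b} g \<le> B"
  obtains l where "((\<lambda>b. integral {a..b} g) \<longlongrightarrow> l) at_top" "(g has_integral l) {a..}"
proof -
  have int: "g integrable_on {a..b}" for b
    by (rule integrable_continuous_interval, rule continuous_on_subset[OF cont]) auto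
  have "mono (\<lambda>b. integral {a..b} g)"
  proof (rule monoI)
    fix b b' :: real assume "b \<le> b'"
    then show "integral {a..b} g \<le> integral {a..b'} g"
      by (cases "a \<le> b") (auto intro!: integral_subset_le integral_nonneg int nonneg)
  qed
  moreover obtain l where "(\<lambda>n. integral {a..real n} g) \<longlonglongrightarrow> l"
    using incseq_convergent[of "\<lambda>n. integral {a..real n} g" B] bounded
      monoD[OF calculation] by (force simp: incseq_def)
  ultimately have lim: "((\<lambda>b. integral {a..b} g) \<longlongrightarrow> l) at_top"
    by (rule tendsto_at_topI_sequentially_real)
  moreover have "(g has_integral l) {a..}"
    by (rule has_integral_to_inf[OF int lim]) (use nonneg in auto)
  ultimately show ?thesis by (rule that)
qed

lemma tendsto_0_if_lipschitz_dominated_integrable: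
  fixes f :: "real \<Rightarrow> 'a::real_normed_vector" and g :: "real \<Rightarrow> real"
  assumes lip: "L-lipschitz_on {a..} f"
    and dom: "\<And>t. t \<ge> a \<Longrightarrow> norm (f t) \<le> g t"
    and int: "\<And>b. g integrable_on {a..b}"
    and lim: "((\<lambda>b. integral {a..b} g) \<longlongrightarrow> l) at_top"
  shows "(f \<longlongrightarrow> 0) at_top"
proof (rule tendsto_iff[THEN iffD2], intro allI impI)
  fix e :: real assume e: "e > 0"
  have L: "L \<ge> 0" using lip by (rule lipschitz_on_nonneg)
  define h where "h = e / (2 * (L + 1))"
  have "h > 0" using e L by (simp add: h_def)
  have "L * h \<le> (L + 1) * h" using \<open>h > 0\<close> by simp
  also have "\<dots> = e / 2" using L by (simp add: h_def field_simps)
  finally have Lh: "L * h \<le> e / 2" .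
  have "\<forall>\<^sub>F b in at_top. dist (integral {a..b} g) l < h * e / 4"
    by (rule tendstoD[OF lim]) (use \<open>h > 0\<close> e in simp)
  then obtain T where T: "\<And>b. b \<ge> T \<Longrightarrow> dist (integral {a..b} g) l < h * e / 4"
    unfolding eventually_at_top_linorder by blast
  have "norm (f t) < e" if t: "t \<ge> max a T" for t
  proof (rule ccontr)
    assume "\<not> norm (f t) < e"
    have "g s \<ge> e / 2" if s: "s \<in> {t..t + h}" for s
    proof -
      have "norm (f t - f s) \<le> L * (s - t)"
        using lipschitz_onD[OF lip, of t s] s t by (simp add: dist_norm dist_real_def)
      also have "\<dots> \<le> L * h" using s L by (intro mult_left_mono) auto
      moreover have "norm (f t) - norm (f t - f s) \<le> norm (f s)"
        using norm_triangle_ineq2[of "f t" "f t - f s"] by simp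
      moreover have "norm (f s) \<le> g s" using dom s t by simp
      ultimately show ?thesis using \<open>\<not> norm (f t) < e\<close> Lh by linarith
    qed
    then have "integral {t..t + h} (\<lambda>_. e / 2) \<le> integral {t..t + h} g"
      using integrable_on_subinterval[OF int[of "t + h"], of t "t + h"] t
      by (intro integral_le) auto
    then have "h * e / 2 \<le> integral {t..t + h} g"
      using \<open>h > 0\<close> by simp
    also have "\<dots> = integral {a..t + h} g - integral {a..t} g"
      using Henstock_Kurzweil_Integration.integral_combine[OF _ _ int[of "t + h"], of t] t \<open>h > 0\<close> by simp
    also have "\<dots> < h * e / 2"
      using T[of t] T[of "t + h"] t \<open>h > 0\<close> unfolding dist_real_def by linarith
    finally show False by simp
  qed
  then show "\<forall>\<^sub>F t in at_top. dist (f t) 0 < e"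
    unfolding eventually_at_top_linorder by (intro exI[of _ "max a T"]) simp
qed

section \<open>The singular pair potential\<close>

definition sing_primitive :: "real \<Rightarrow> nat \<Rightarrow> real \<Rightarrow> real" where
  "sing_primitive d \<theta> r = - 1 / (real (\<theta> - 1) * (r - d) ^ (\<theta> - 1))"

lemma has_real_derivative_sing_primitive:
  assumes "\<theta> \<ge> 2" "r \<noteq> d"
  shows "(sing_primitive d \<theta> has_real_derivative fsing d \<theta> r) (at r)"
proof -
  obtain q where q: "\<theta> = Suc (Suc q)" using \<open>\<theta> \<ge> 2\<close> by (metis add_2_eq_Suc le_Suc_ex)
  have "((\<lambda>r. 1 / (real (Suc q) * (r - d) ^ Suc q)) has_real_derivative
      - (1 / (r - d) ^ Suc (Suc q))) (at r)"
    using \<open>r \<noteq> d\<close> by (intro derivative_eq_intros) (rule refl | simp)+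
  from DERIV_minus[OF this] show ?thesis
    unfolding q sing_primitive_def[abs_def] fsing_def by simp
qed

lemma sing_primitive_neg:
  assumes "\<theta> \<ge> 2" "d < r"
  shows "sing_primitive d \<theta> r < 0"
  using assms by (simp add: sing_primitive_def)

lemma sing_primitive_pos:
  assumes "\<theta> \<ge> 2" "even \<theta>" "r < d"
  shows "sing_primitive d \<theta> r > 0"
proof -
  have "odd (\<theta> - 1)" using assms by simp
  then have "(r - d) ^ (\<theta> - 1) < 0" using \<open>r < d\<close> by simp
  then show ?thesis using \<open>\<theta> \<ge> 2\<close> by (simp add: sing_primitive_def mult_pos_neg divide_neg_neg)
qed

lemma abs_fsing_le:
  assumes "\<theta> \<ge> 2" and r: "r \<noteq> d" "\<bar>r - d\<bar> \<le> D"
    and B: "\<bar>sing_primitive d \<theta> r\<bar> \<le> B"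
  shows "\<bar>fsing d \<theta> r\<bar> \<le> (real (\<theta> - 1) * B)\<^sup>2 * D ^ (\<theta> - 2)"
proof -
  obtain q where q: "\<theta> = Suc (Suc q)" using \<open>\<theta> \<ge> 2\<close> by (metis add_2_eq_Suc le_Suc_ex)
  define \<rho> where "\<rho> = \<bar>r - d\<bar>"
  have \<rho>: "\<rho> > 0" "\<rho> \<le> D" using r by (auto simp: \<rho>_def)
  have "1 / \<rho> ^ Suc q = real (Suc q) * \<bar>sing_primitive d \<theta> r\<bar>"
    using \<rho> by (simp add: q sing_primitive_def \<rho>_def abs_mult power_abs del: of_nat_Suc)
  also have "\<dots> \<le> real (Suc q) * B" using B by (intro mult_left_mono) auto
  finally have inv: "1 / \<rho> ^ Suc q \<le> real (Suc q) * B" .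
  have "\<bar>fsing d \<theta> r\<bar> = 1 / \<rho> ^ Suc (Suc q)"
    unfolding q fsing_def \<rho>_def by (simp only: abs_divide power_abs abs_one)
  also have "\<dots> = (1 / \<rho> ^ Suc q)\<^sup>2 * \<rho> ^ q"
    using \<rho> by (simp add: power2_eq_square field_simps)
  also have "\<dots> \<le> (real (Suc q) * B)\<^sup>2 * D ^ q"
    using inv \<rho> by (intro mult_mono power_mono) auto
  finally show ?thesis by (simp add: q)
qed

section \<open>Energy estimates along a solution\<close>

locale flocking_solution =
  fixes x v :: "real \<Rightarrow> 'k::{finite,linorder} \<Rightarrow> real ^ 'n"
    and K \<sigma> d0 d1 \<beta> :: real and \<theta> :: nat
  assumes K: "K > 0" and \<sigma>: "\<sigma> > 0" and d0: "0 < d0" and d01: "d0 < d1" and \<beta>: "\<beta> \<ge> 0"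
    and \<theta>: "\<theta> \<ge> 2" "even \<theta>"
    and init: "\<And>i j. i \<noteq> j \<Longrightarrow> d0 < (norm (x 0 i - x 0 j))\<^sup>2 \<and> (norm (x 0 i - x 0 j))\<^sup>2 < d1"
    and defined: "\<And>t i j. t \<ge> 0 \<Longrightarrow> i \<noteq> j \<Longrightarrow>
                    (norm (x t i - x t j))\<^sup>2 \<noteq> d0 \<and> (norm (x t i - x t j))\<^sup>2 \<noteq> d1"
    and dx: "\<And>t i. t \<ge> 0 \<Longrightarrow> ((\<lambda>s. x s i) has_vector_derivative v t i) (at t within {0..})"
    and dv: "\<And>t i. t \<ge> 0 \<Longrightarrow>
               ((\<lambda>s. v s i) has_vector_derivative flock_rhs K \<sigma> \<beta> d0 d1 \<theta> (x t) (v t) i)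
                 (at t within {0..})"
begin

abbreviation accel :: "real \<Rightarrow> 'k \<Rightarrow> real ^ 'n" where
  "accel t i \<equiv> flock_rhs K \<sigma> \<beta> d0 d1 \<theta> (x t) (v t) i"

abbreviation sqdist :: "real \<Rightarrow> 'k \<Rightarrow> 'k \<Rightarrow> real" where
  "sqdist t i j \<equiv> (norm (x t i - x t j))\<^sup>2"

lemma avg_velocity_const:
  assumes "t \<ge> 0" shows "avg (v t) = avg (v 0)"
proof -
  have "((\<lambda>s. avg (v s)) has_derivative (\<lambda>h. 0)) (at s within {0..})" if "s \<in> {0..}" for s
  proof -
    have "((\<lambda>s. avg (v s)) has_vector_derivative
        (1 / real CARD('k)) *\<^sub>R (\<Sum>i\<in>UNIV. accel s i)) (at s within {0..})"
      unfolding avg_def using that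
      by (intro has_vector_derivative_sum bounded_linear.has_vector_derivative[OF
          bounded_linear_scaleR_right] dv) auto
    then show ?thesis by (simp add: sum_flock_rhs_eq_0 has_vector_derivative_def)
  qed
  then show ?thesis
    using has_derivative_zero_unique[of "{0..}" "\<lambda>s. avg (v s)" t 0] assms by auto
qed

lemma sqdist_has_derivative:
  assumes "t \<ge> 0"
  shows "((\<lambda>s. sqdist s i j) has_real_derivative 2 * ((x t i - x t j) \<bullet> (v t i - v t j)))
    (at t within {0..})"
proof -
  have "((\<lambda>s. (x s i - x s j) \<bullet> (x s i - x s j)) has_vector_derivative
      (x t i - x t j) \<bullet> (v t i - v t j) + (v t i - v t j) \<bullet> (x t i - x t j)) (at t within {0..})"
    using assms by (intro bounded_bilinear.has_vector_derivative[OF bounded_bilinear_inner]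
        has_vector_derivative_diff dx)
  then show ?thesis
    by (simp add: has_real_derivative_iff_has_vector_derivative power2_norm_eq_inner inner_commute)
qed

lemma sqdist_bounds:
  assumes "t \<ge> 0" "i \<noteq> j"
  shows "d0 < sqdist t i j \<and> sqdist t i j < d1"
proof (rule ccontr)
  have cont: "continuous_on {0..t} (\<lambda>s. sqdist s i j)"
    by (rule DERIV_continuous_on, rule DERIV_subset[OF sqdist_has_derivative]) auto
  assume "\<not> ?thesis"
  then consider "sqdist t i j \<le> d0" | "sqdist t i j \<ge> d1" by linarith
  then have "\<exists>s. 0 \<le> s \<and> s \<le> t \<and> (sqdist s i j = d0 \<or> sqdist s i j = d1)"
  proof cases
    case 1
    then show ?thesis using IVT2'[OF 1 _ \<open>t \<ge> 0\<close> cont] init[OF \<open>i \<noteq> j\<close>] by auto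
  next
    case 2
    then show ?thesis using IVT'[OF _ 2 \<open>t \<ge> 0\<close> cont] init[OF \<open>i \<noteq> j\<close>] by auto
  qed
  then show False using defined \<open>i \<noteq> j\<close> by blast
qed

lemma sqdist_less_d1: "t \<ge> 0 \<Longrightarrow> sqdist t i j < d1"
  using sqdist_bounds[of t i j] d0 d01 by (cases "i = j") auto

lemma norm_position_diff_le: "t \<ge> 0 \<Longrightarrow> norm (x t i - x t j) \<le> sqrt d1"
  using real_sqrt_le_mono[OF less_imp_le[OF sqdist_less_d1]] by simp

definition spread :: "real \<Rightarrow> real" where
  "spread t = sqrt (\<Sum>i\<in>UNIV. (norm (v t i - avg (v 0)))\<^sup>2)"

lemma spread_nonneg: "spread t \<ge> 0"
  unfolding spread_def by (simp add: sum_nonneg)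

lemma Lambda_eq_spread:
  assumes "t \<ge> 0" shows "Lambda (v t) = spread t"
  unfolding spread_def Lambda_eq_sqrt_sum_deviation avg_velocity_const[OF assms] ..

lemma norm_velocity_deviation_le_spread: "norm (v t i - avg (v 0)) \<le> spread t"
proof -
  have "(norm (v t i - avg (v 0)))\<^sup>2 \<le> (\<Sum>i\<in>UNIV. (norm (v t i - avg (v 0)))\<^sup>2)"
    by (rule member_le_sum) auto
  then show ?thesis unfolding spread_def by (rule real_le_rsqrt)
qed

lemma spread_has_derivative:
  assumes "t \<ge> 0"
  shows "(spread has_real_derivative
      (if spread t = 0 then 0 else (\<Sum>i\<in>UNIV. (v t i - avg (v 0)) \<bullet> accel t i) / spread t))
    (at t within {0..})"
proof -
  have "accel t i = 0" if "(\<Sum>i\<in>UNIV. (norm (v t i - avg (v 0)))\<^sup>2) = 0" for i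
  proof -
    have "v t = (\<lambda>_. avg (v 0))"
      using that by (simp add: sum_nonneg_eq_0_iff fun_eq_iff)
    then show ?thesis by (simp add: flock_rhs_const_velocity)
  qed
  moreover have "((\<lambda>s. v s i - avg (v 0)) has_vector_derivative accel t i) (at t within {0..})"
    for i using dv[OF assms] by (simp add: has_vector_derivative_diff_const)
  ultimately have "((\<lambda>s. sqrt (\<Sum>i\<in>UNIV. (norm (v s i - avg (v 0)))\<^sup>2)) has_real_derivative
      (if (\<Sum>i\<in>UNIV. (norm (v t i - avg (v 0)))\<^sup>2) = 0 then 0
       else (\<Sum>i\<in>UNIV. (v t i - avg (v 0)) \<bullet> accel t i)
         / sqrt (\<Sum>i\<in>UNIV. (norm (v t i - avg (v 0)))\<^sup>2))) (at t within {0..})"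
    by (intro has_real_derivative_sqrt_sum_norm_sq) auto
  then show ?thesis unfolding spread_def[abs_def] by simp
qed

abbreviation pair_potential :: "real \<Rightarrow> 'k \<Rightarrow> 'k \<Rightarrow> real" where
  "pair_potential t i j \<equiv> sing_primitive d1 \<theta> (sqdist t i j) - sing_primitive d0 \<theta> (sqdist t i j)"

definition potential :: "real \<Rightarrow> real" where
  "potential t = (1/4) * (\<Sum>(i, j) \<in> {(i, j). i \<noteq> j}. pair_potential t i j)"

definition interaction_work :: "real \<Rightarrow> real" where
  "interaction_work t = (\<Sum>i\<in>UNIV. \<Sum>j\<in>UNIV.
     (fsing d0 \<theta> (sqdist t i j) - fsing d1 \<theta> (sqdist t i j)) * ((x t i - x t j) \<bullet> (v t i - v t j)))"

definition alignment_dissipation :: "real \<Rightarrow> real" where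
  "alignment_dissipation t = (1/2) * (\<Sum>i\<in>UNIV. \<Sum>j\<in>UNIV.
     align_weight K \<sigma> \<beta> (x t i) (x t j) * (norm (v t i - v t j))\<^sup>2)"

definition rate :: real where
  "rate = real CARD('k) * (K / (\<sigma>\<^sup>2 + d1) powr \<beta>)"

lemma rate_pos: "rate > 0"
  using add_nonneg_pos[of "\<sigma>\<^sup>2" d1] K d0 d01 by (simp add: rate_def)

lemma sing_primitive_sqdist_signs:
  assumes "t \<ge> 0" "i \<noteq> j"
  shows "sing_primitive d0 \<theta> (sqdist t i j) < 0" "sing_primitive d1 \<theta> (sqdist t i j) > 0"
  using sqdist_bounds[OF assms] \<theta> by (auto intro: sing_primitive_neg sing_primitive_pos)

lemma pair_potential_nonneg: "t \<ge> 0 \<Longrightarrow> i \<noteq> j \<Longrightarrow> pair_potential t i j \<ge> 0"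
  using sing_primitive_sqdist_signs[of t i j] by simp

lemma pair_potential_le_potential:
  assumes "t \<ge> 0" "i \<noteq> j"
  shows "pair_potential t i j \<le> 4 * potential t"
proof -
  have "(\<lambda>(i, j). pair_potential t i j) (i, j) \<le> (\<Sum>(i, j) \<in> {(i, j). i \<noteq> j}. pair_potential t i j)"
    by (rule member_le_sum) (use assms pair_potential_nonneg in auto)
  then show ?thesis by (simp add: potential_def)
qed

lemma potential_nonneg: "t \<ge> 0 \<Longrightarrow> potential t \<ge> 0"
  unfolding potential_def
  by (intro mult_nonneg_nonneg sum_nonneg) (auto intro: pair_potential_nonneg)

lemma potential_has_derivative:
  assumes "t \<ge> 0"
  shows "(potential has_real_derivative - (1/2) * interaction_work t) (at t within {0..})"
proof -
  let ?Dp = "\<lambda>i j. (x t i - x t j) \<bullet> (v t i - v t j)"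
  let ?f = "\<lambda>d i j. fsing d \<theta> (sqdist t i j)"
  have "((\<lambda>s. sing_primitive d1 \<theta> (sqdist s i j) - sing_primitive d0 \<theta> (sqdist s i j))
      has_real_derivative (?f d1 i j - ?f d0 i j) * (2 * ?Dp i j)) (at t within {0..})"
    if "i \<noteq> j" for i j
    using sqdist_bounds[OF assms that] \<theta>
    by (auto simp: left_diff_distrib intro!: DERIV_diff DERIV_chain2[OF has_real_derivative_sing_primitive]
        sqdist_has_derivative assms)
  then have "(potential has_real_derivative
      (1/4) * (\<Sum>(i, j) \<in> {(i, j). i \<noteq> j}. (?f d1 i j - ?f d0 i j) * (2 * ?Dp i j))) (at t within {0..})"
    unfolding potential_def[abs_def] by (intro DERIV_cmult DERIV_sum) auto
  moreover have "(\<Sum>(i, j) \<in> {(i, j). i \<noteq> j}. (?f d1 i j - ?f d0 i j) * (2 * ?Dp i j))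
      = (\<Sum>(i, j) \<in> UNIV. (?f d1 i j - ?f d0 i j) * (2 * ?Dp i j))"
    by (rule sum.mono_neutral_left) auto
  moreover have "\<dots> = (\<Sum>i\<in>UNIV. \<Sum>j\<in>UNIV. - 2 * ((?f d0 i j - ?f d1 i j) * ?Dp i j))"
    by (simp add: sum.cartesian_product algebra_simps)
  moreover have "\<dots> = - 2 * interaction_work t"
    by (simp add: interaction_work_def sum_distrib_left)
  ultimately show ?thesis by simp
qed

lemma sum_inner_accel:
  assumes "t \<ge> 0"
  shows "(\<Sum>i\<in>UNIV. (v t i - avg (v 0)) \<bullet> accel t i)
    = spread t * ((1/2) * interaction_work t) - alignment_dissipation t"
  unfolding sum_inner_flock_rhs Lambda_eq_spread[OF assms] interaction_work_def alignment_dissipation_def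
  by (simp only: mult.assoc sum_subtractf flip: sum_distrib_left) (simp add: right_diff_distrib)

lemma alignment_dissipation_ge:
  assumes "t \<ge> 0"
  shows "rate * (spread t)\<^sup>2 \<le> alignment_dissipation t"
proof -
  let ?a = "K / (\<sigma>\<^sup>2 + d1) powr \<beta>"
  have "(\<Sum>i\<in>UNIV. \<Sum>j\<in>UNIV. ?a * (norm (v t i - v t j))\<^sup>2)
      \<le> (\<Sum>i\<in>UNIV. \<Sum>j\<in>UNIV. align_weight K \<sigma> \<beta> (x t i) (x t j) * (norm (v t i - v t j))\<^sup>2)"
    using K \<sigma> \<beta> sqdist_less_d1[OF assms]
    by (intro sum_mono mult_right_mono align_weight_ge) (auto simp: less_imp_le)
  moreover have "(\<Sum>i\<in>UNIV. \<Sum>j\<in>UNIV. ?a * (norm (v t i - v t j))\<^sup>2) = 2 * rate * (spread t)\<^sup>2"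
    unfolding sum_distrib_left[symmetric] sum_sum_norm_diff_sq_avg avg_velocity_const[OF assms]
    by (simp add: spread_def rate_def sum_nonneg)
  ultimately show ?thesis unfolding alignment_dissipation_def by simp
qed

lemma energy_dissipation:
  assumes "t \<ge> 0"
  shows "\<exists>D. ((\<lambda>s. spread s + potential s) has_real_derivative D) (at t within {0..})
    \<and> D \<le> - rate * spread t"
proof -
  let ?D = "(if spread t = 0 then 0
      else (\<Sum>i\<in>UNIV. (v t i - avg (v 0)) \<bullet> accel t i) / spread t) + - (1/2) * interaction_work t"
  have "?D \<le> - rate * spread t"
  proof (cases "spread t = 0")
    case True
    then have "v t i = avg (v 0)" for i
      using norm_velocity_deviation_le_spread[of t i] by simp
    then show ?thesis using True by (simp add: interaction_work_def)
  next
    case False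
    then have pos: "spread t > 0" using spread_nonneg[of t] by linarith
    have "?D = - (alignment_dissipation t / spread t)"
      using pos by (simp add: sum_inner_accel[OF assms] field_simps)
    also have "\<dots> \<le> - (rate * (spread t)\<^sup>2 / spread t)"
      using alignment_dissipation_ge[OF assms] pos by (simp add: divide_right_mono)
    also have "\<dots> = - rate * spread t"
      using pos by (simp add: power2_eq_square)
    finally show ?thesis .
  qed
  then show ?thesis
    using DERIV_add[OF spread_has_derivative[OF assms] potential_has_derivative[OF assms]] by blast
qed

lemma continuous_on_spread: "continuous_on {0..} spread"
  by (rule DERIV_continuous_on[OF spread_has_derivative]) auto

lemma spread_integrable_on_interval: "spread integrable_on {0..b}"
  by (rule integrable_continuous_interval, rule continuous_on_subset[OF continuous_on_spread]) auto

definition initial_energy :: real where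
  "initial_energy = spread 0 + potential 0"

lemma energy_bound:
  assumes "T \<ge> 0"
  shows "spread T + potential T + rate * integral {0..T} spread \<le> initial_energy"
proof -
  have "spread T + potential T + integral {0..T} (\<lambda>t. rate * spread t) \<le> spread 0 + potential 0"
  proof (rule dissipation_integral_le[OF assms])
    fix t assume "t \<in> {0..T}"
    then obtain D where "((\<lambda>s. spread s + potential s) has_real_derivative D) (at t within {0..})"
      and "D \<le> - (rate * spread t)"
      using energy_dissipation[of t] by auto
    then show "\<exists>D. ((\<lambda>s. spread s + potential s) has_real_derivative D) (at t within {0..T})
        \<and> D \<le> - (rate * spread t)"
      by (intro exI[of _ D]) (auto intro: DERIV_subset)
  qed (use integrable_on_cmult_left[OF spread_integrable_on_interval, of rate T] in simp)
  then show ?thesis by (simp add: initial_energy_def)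
qed

lemma dissipated_energy_nonneg: "rate * integral {0..T} spread \<ge> 0"
  using rate_pos integral_nonneg[OF spread_integrable_on_interval spread_nonneg] by simp

lemma spread_le_initial_energy: "t \<ge> 0 \<Longrightarrow> spread t \<le> initial_energy"
  using energy_bound[of t] potential_nonneg[of t] dissipated_energy_nonneg[of t] by linarith

lemma potential_le_initial_energy: "t \<ge> 0 \<Longrightarrow> potential t \<le> initial_energy"
  using energy_bound[of t] spread_nonneg[of t] dissipated_energy_nonneg[of t] by linarith

lemma integral_spread_le: "integral {0..T} spread \<le> initial_energy / rate"
proof (cases "T \<ge> 0")
  case True
  then have "rate * integral {0..T} spread \<le> initial_energy"
    using energy_bound[of T] spread_nonneg[of T] potential_nonneg[of T] by linarith
  then show ?thesis using rate_pos by (simp add: field_simps)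
next
  case False
  then show ?thesis
    using spread_nonneg[of 0] potential_nonneg[of 0] rate_pos by (simp add: initial_energy_def)
qed

lemma abs_sing_primitive_sqdist_le:
  assumes "t \<ge> 0" "i \<noteq> j"
  shows "\<bar>sing_primitive d0 \<theta> (sqdist t i j)\<bar> \<le> 4 * initial_energy"
    "\<bar>sing_primitive d1 \<theta> (sqdist t i j)\<bar> \<le> 4 * initial_energy"
  using sing_primitive_sqdist_signs[OF assms] pair_potential_le_potential[OF assms]
    potential_le_initial_energy[OF assms(1)] by auto

lemma abs_fsing_sqdist_le:
  assumes "t \<ge> 0" "i \<noteq> j" "d \<in> {d0, d1}"
  shows "\<bar>fsing d \<theta> (sqdist t i j)\<bar> \<le> (real (\<theta> - 1) * (4 * initial_energy))\<^sup>2 * d1 ^ (\<theta> - 2)"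
  using sqdist_bounds[OF assms(1,2)] assms(3) d0 abs_sing_primitive_sqdist_le[OF assms(1,2)]
  by (intro abs_fsing_le \<theta>(1)) auto

lemma accel_bounded:
  obtains B where "\<And>t i. t \<ge> 0 \<Longrightarrow> norm (accel t i) \<le> B"
proof -
  define M where "M = (real (\<theta> - 1) * (4 * initial_energy))\<^sup>2 * d1 ^ (\<theta> - 2)"
  have "norm (accel t i) \<le> real CARD('k) * (K / (\<sigma>\<^sup>2) powr \<beta> * (2 * initial_energy)
      + initial_energy * (2 * M) * sqrt d1)" if "t \<ge> 0" for t i
  proof -
    have "norm (v t j - v t i) \<le> 2 * initial_energy" for j
      using norm_triangle_ineq4[of "v t j - avg (v 0)" "v t i - avg (v 0)"]
        norm_velocity_deviation_le_spread[of t j] norm_velocity_deviation_le_spread[of t i]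
        spread_le_initial_energy[OF that] by simp
    then have "norm (accel t i)
        \<le> real CARD('k) * (K / (\<sigma>\<^sup>2) powr \<beta> * (2 * initial_energy) + spread t * (2 * M) * sqrt d1)"
      using K \<sigma> \<beta> d0 d01 abs_fsing_sqdist_le[OF that] norm_position_diff_le[OF that]
      unfolding Lambda_eq_spread[OF that, symmetric] M_def
      by (intro norm_flock_rhs_le) auto
    also have "\<dots> \<le> real CARD('k) * (K / (\<sigma>\<^sup>2) powr \<beta> * (2 * initial_energy)
        + initial_energy * (2 * M) * sqrt d1)"
      using spread_le_initial_energy[OF that] d0 d01
      by (intro mult_left_mono add_left_mono mult_right_mono) (auto simp: M_def)
    finally show ?thesis .
  qed
  then show ?thesis by (fact that)
qed

lemma velocity_deviation_lipschitz:
  obtains L where "L-lipschitz_on {0..} (\<lambda>t. v t i - avg (v 0))"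
proof -
  obtain B where B: "\<And>t j. t \<ge> 0 \<Longrightarrow> norm (accel t j) \<le> B" using accel_bounded by blast
  have "B-lipschitz_on {0..} (\<lambda>t. v t i - avg (v 0))"
  proof (rule bounded_derivative_imp_lipschitz)
    fix t :: real assume "t \<in> {0..}"
    then show "((\<lambda>t. v t i - avg (v 0)) has_derivative (\<lambda>h. h *\<^sub>R accel t i)) (at t within {0..})"
      using has_vector_derivative_diff_const[THEN iffD2, OF dv[of t i]]
      by (simp add: has_vector_derivative_def)
    show "onorm (\<lambda>h. h *\<^sub>R accel t i) \<le> B"
      using B[of t i] \<open>t \<in> {0..}\<close> by (simp add: onorm_scaleR_left[OF bounded_linear_ident] onorm_id)
  next
    show "0 \<le> B" using B[of 0 i] norm_ge_zero order_trans by blast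
  qed (rule convex_real_interval)
  then show ?thesis by (rule that)
qed

lemma velocity_converges: "((\<lambda>t. v t i - avg (v 0)) \<longlongrightarrow> 0) at_top"
proof -
  obtain L where "L-lipschitz_on {0..} (\<lambda>t. v t i - avg (v 0))"
    by (rule velocity_deviation_lipschitz)
  moreover obtain l where "((\<lambda>b. integral {0..b} spread) \<longlongrightarrow> l) at_top"
    by (rule integral_tendsto_at_top_if_nonneg_bounded[OF continuous_on_spread spread_nonneg
          integral_spread_le])
  ultimately show ?thesis
    by (rule tendsto_0_if_lipschitz_dominated_integrable[OF _ norm_velocity_deviation_le_spread
          spread_integrable_on_interval])
qed

end

theorem mainTheorem2:
  fixes x v :: "real \<Rightarrow> 'k::{finite,linorder} \<Rightarrow> real ^ 'n"
    and K \<sigma> d0 d1 \<beta> :: real and \<theta> :: nat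
  assumes k2: "CARD('k) \<ge> 2"
    and K: "K > 0" and sig: "\<sigma> > 0" and d: "0 < d0" "d0 < d1"
    and beta: "0 < \<beta>" "\<beta> \<le> 1/2"
    and theta: "\<theta> > 0" "even \<theta>"
    and init: "\<And>i j. i \<noteq> j \<Longrightarrow> d0 < (norm (x 0 i - x 0 j))\<^sup>2 \<and> (norm (x 0 i - x 0 j))\<^sup>2 < d1"
    and defined: "\<And>t i j. t \<ge> 0 \<Longrightarrow> i \<noteq> j \<Longrightarrow>
                    (norm (x t i - x t j))\<^sup>2 \<noteq> d0 \<and> (norm (x t i - x t j))\<^sup>2 \<noteq> d1"
    and dx: "\<And>t i. t \<ge> 0 \<Longrightarrow> ((\<lambda>s. x s i) has_vector_derivative v t i) (at t within {0..})"
    and dv: "\<And>t i. t \<ge> 0 \<Longrightarrow>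
               ((\<lambda>s. v s i) has_vector_derivative flock_rhs K \<sigma> \<beta> d0 d1 \<theta> (x t) (v t) i)
                 (at t within {0..})"
  shows "(\<forall>t\<ge>0. avg (v t) = avg (v 0))
       \<and> (\<exists>B. \<forall>t\<ge>0. \<forall>i. norm (x t i - avg (x t)) \<le> B)
       \<and> (\<lambda>t. sqrt (\<Sum>i\<in>UNIV. (norm (v t i - avg (v 0)))\<^sup>2)) integrable_on {0..}
       \<and> (\<forall>i. ((\<lambda>t. v t i - avg (v 0)) \<longlongrightarrow> 0) at_top)"
proof -
  interpret flocking_solution x v K \<sigma> d0 d1 \<beta> \<theta>
    using assms by unfold_locales (auto elim: evenE)
  obtain l where "(spread has_integral l) {0..}"
    by (rule integral_tendsto_at_top_if_nonneg_bounded[OF continuous_on_spread spread_nonneg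
          integral_spread_le])
  moreover have "norm (x t i - avg (x t)) \<le> sqrt d1" if "t \<ge> 0" for t i
    by (rule norm_diff_avg_le[OF norm_position_diff_le[OF that]])
  ultimately show ?thesis
    using avg_velocity_const velocity_converges unfolding spread_def[abs_def] by blast
qed

end
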